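(* Let $0<p\le 1\le s<\infty$ with $p<s$, $\lambda>n(\frac sp-1)$, and let $s'=s/(s-1)$ (with $n/s'=0$ if $s=1$). Suppose $M$ satisfies, for a ball $B=B(x_B,r)$ and some constant $C>0$: (M1) $\|M\|_{L^s(B)}\le C\,r^{n(1/s-1/p)}$ and (M2) $\big(\int_{B^c}|M(x)|^s|x-x_B|^\lambda dx\big)^{1/s}\le C\,r^{\lambda/s+n(1/s-1/p)}$. Then for every $\gamma\in(\gamma_p,\frac{\lambda}{s}-\frac{n}{s'})$ and the integer $N$ with $N<\gamma\le N+1$, for all $\xi\in\mathbb R^n$, $$|\widehat M(\xi)|\lesssim |\xi|^{\gamma}r^{\gamma-\gamma_p}+\sum_{|\alpha|\le N}|\xi|^{|\alpha|}\Big|\int_{\mathbb R^n}M(x)(x-x_B)^\alpha dx\Big|,$$ with implicit constant depending on $n,p,s,\lambda,\gamma,C$ but not on $M$, $B$ or $\xi$.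
   Context: $\gamma_p=n(1/p-1)$. $\widehat M(\xi)=\int M(x)e^{-2\pi i x\cdot\xi}dx$; $B^c$ is the complement of $B$. (Under (M1),(M2) $M\in L^1$.) *)

theory Defs
  imports "HOL-Analysis.Analysis"
begin

definition fourier_transform :: "(real^'n \<Rightarrow> complex) \<Rightarrow> real^'n \<Rightarrow> complex" where
  "fourier_transform M \<xi> = (\<integral>x. M x * cis (- 2 * pi * (x \<bullet> \<xi>)) \<partial>lborel)"

definition mi_order :: "('n::finite \<Rightarrow> nat) \<Rightarrow> nat" where
  "mi_order \<alpha> = (\<Sum>i\<in>UNIV. \<alpha> i)"

definition mi_pow :: "real^'n::finite \<Rightarrow> ('n \<Rightarrow> nat) \<Rightarrow> real" where
  "mi_pow y \<alpha> = (\<Prod>i\<in>UNIV. (y $ i) ^ \<alpha> i)"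

definition gamma_p :: "nat \<Rightarrow> real \<Rightarrow> real" where
  "gamma_p n p = real n * (1 / p - 1)"

end

theory Submission
  imports Defs "HOL-Probability.Characteristic_Functions"
begin

text \<open>Recentring at \<open>xB\<close>, \<open>e^(-2\<pi>i x\<cdot>\<xi>) = e^(-2\<pi>i xB\<cdot>\<xi>) e^(i\<theta>)\<close> with \<open>\<theta> = -2\<pi>(x - xB)\<cdot>\<xi>\<close>.
  The Taylor polynomial of degree \<open>N\<close> of \<open>e^(i\<theta>)\<close>, expanded multinomially, produces the moment
  terms; the remainder is at most \<open>2|\<theta>|^\<gamma>\<close> since \<open>N < \<gamma> \<le> N + 1\<close>, which yields
  \<open>|\<xi>|^\<gamma> \<integral>|M(x)| |x - xB|^\<gamma> dx\<close>. This weighted moment is \<open>O(r^(\<gamma> - \<gamma>_p))\<close>: the pointwise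
  Young inequality \<open>a \<le> a^s t^(1 - s) + t\<close>, with a well-chosen threshold \<open>t\<close>, bounds it on \<open>B\<close>
  by (M1), and off \<open>B\<close> by (M2) plus \<open>\<integral>_{B^c} |x - xB|^(-b) dx\<close> for some \<open>b > n\<close>, which is
  summed over dyadic shells.\<close>

section \<open>The weighted moment\<close>

lemma young_threshold:
  fixes a t s :: real
  assumes "a \<ge> 0" "t > 0" "s \<ge> 1"
  shows "a \<le> a powr s * t powr (1 - s) + t"
proof (cases "a \<le> t")
  case True
  thus ?thesis using assms by (simp add: add_nonneg_nonneg order_trans[OF True])
next
  case False
  hence a: "a > t" by simp
  have eq: "a powr s * t powr (1 - s) = a * (a / t) powr (s - 1)"
    by (rule ln_inj_iff[THEN iffD1]) (use assms a in \<open>auto simp: ln_mult ln_powr ln_div algebra_simps\<close>)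
  have "(a / t) powr (s - 1) \<ge> 1" using a assms by (intro ge_one_powr_ge_zero) auto
  hence "a \<le> a * (a / t) powr (s - 1)" using assms a by (metis mult.right_neutral mult_left_mono)
  thus ?thesis using eq assms by simp
qed

lemma nn_integral_le_lincomb:
  fixes F G H :: "'a \<Rightarrow> ennreal"
  assumes "\<And>x. F x \<le> ennreal A * G x + ennreal B * H x"
    and "G \<in> borel_measurable M" "H \<in> borel_measurable M"
    and "integral\<^sup>N M G \<le> ennreal X" "integral\<^sup>N M H \<le> ennreal Y"
    and "A \<ge> 0" "B \<ge> 0" "X \<ge> 0" "Y \<ge> 0"
  shows "integral\<^sup>N M F \<le> ennreal (A * X + B * Y)"
proof -
  have "integral\<^sup>N M F \<le> (\<integral>\<^sup>+x. ennreal A * G x + ennreal B * H x \<partial>M)"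
    by (rule nn_integral_mono) (rule assms(1))
  also have "\<dots> = ennreal A * integral\<^sup>N M G + ennreal B * integral\<^sup>N M H"
    using assms(2,3) by (simp add: nn_integral_add nn_integral_cmult)
  also have "\<dots> \<le> ennreal A * ennreal X + ennreal B * ennreal Y"
    by (intro add_mono mult_left_mono assms(4,5)) auto
  also have "\<dots> = ennreal (A * X + B * Y)"
    using assms(6-9) by (simp add: ennreal_mult ennreal_plus)
  finally show ?thesis .
qed

lemma dyadic_shell_index:
  fixes u r :: real
  assumes "r > 0" "u \<ge> r"
  shows "\<exists>k::nat. 2^k * r \<le> u \<and> u < 2^Suc k * r"
proof -
  obtain m :: nat where "u / r < 2^m" using real_arch_pow[of 2 "u / r"] by auto
  hence ex: "\<exists>m::nat. u < 2^m * r" using assms by (auto simp: field_simps)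
  define m0 where "m0 = (LEAST m::nat. u < 2^m * r)"
  have m0: "u < 2^m0 * r" unfolding m0_def by (rule LeastI_ex[OF ex])
  then obtain k where k: "m0 = Suc k" using assms by (cases m0) auto
  have "\<not> u < 2^k * r" using not_less_Least[of k "\<lambda>m. u < 2^m * r"] k unfolding m0_def by auto
  thus ?thesis using m0 k by (intro exI[of _ k]) auto
qed

text \<open>On the shell \<open>2^k r \<le> |x - xB| < 2^(k+1) r\<close> the integrand is at most \<open>(2^k r)^(-b)\<close>;
  the resulting series is geometric with ratio \<open>2^(n - b) < 1\<close>.\<close>
lemma nn_integral_norm_powr_outside_ball:
  fixes xB :: "'a::euclidean_space" and r b :: real
  assumes r: "r > 0" and b: "b > real DIM('a)"
  shows "(\<integral>\<^sup>+x. ennreal (norm (x - xB) powr (-b)) * indicator (- ball xB r) x \<partial>lborel)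
     \<le> ennreal (unit_ball_vol DIM('a) * 2^DIM('a) / (1 - 2 powr (real DIM('a) - b))
                * r powr (real DIM('a) - b))"
proof -
  define n where "n = real DIM('a)"
  define q where "q = 2 powr (n - b)"
  have q: "0 < q" "q < 1" unfolding q_def using b n_def powr_less_mono[of "n - b" 0 2] by auto
  define S where "S k = ball xB (2^Suc k * r) - ball xB (2^k * r)" for k :: nat
  have S_sets: "S k \<in> sets lborel" for k unfolding S_def by auto
  define c where "c k = (2^k * r) powr (-b)" for k :: nat
  have pointwise: "ennreal (norm (x - xB) powr (-b)) * indicator (- ball xB r) x
      \<le> (\<Sum>k. ennreal (c k) * indicator (S k) x)" for x
  proof (cases "x \<in> ball xB r")
    case False
    hence "norm (x - xB) \<ge> r" by (auto simp: dist_norm norm_minus_commute)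
    then obtain k where k: "2^k * r \<le> norm (x - xB)" "norm (x - xB) < 2^Suc k * r"
      using dyadic_shell_index[OF r] by blast
    have "x \<in> S k" using k unfolding S_def by (auto simp: dist_norm norm_minus_commute)
    moreover have "norm (x - xB) powr (-b) \<le> c k"
      unfolding c_def by (rule powr_mono2') (use k r b n_def in auto)
    ultimately have "ennreal (norm (x - xB) powr (-b)) * indicator (- ball xB r) x
        \<le> ennreal (c k) * indicator (S k) x"
      using False by (simp add: ennreal_leI)
    also have "\<dots> \<le> (\<Sum>k. ennreal (c k) * indicator (S k) x)"
      by (metis ennreal_suminf_lessD less_irrefl not_le)
    finally show ?thesis .
  qed simp
  have shell: "ennreal (c k) * emeasure lborel (S k)
      \<le> ennreal (unit_ball_vol n * 2^DIM('a) * r powr (n - b) * q^k)" for k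
  proof -
    have "emeasure lborel (S k) \<le> emeasure lborel (ball xB (2^Suc k * r))"
      unfolding S_def by (rule emeasure_mono) auto
    also have "\<dots> = ennreal (unit_ball_vol n * (2^Suc k * r) ^ DIM('a))"
      using emeasure_ball[of "2^Suc k * r" xB] r n_def by simp
    finally have "ennreal (c k) * emeasure lborel (S k)
        \<le> ennreal (c k) * ennreal (unit_ball_vol n * (2^Suc k * r) ^ DIM('a))"
      by (rule mult_left_mono) simp
    also have "\<dots> = ennreal (c k * (unit_ball_vol n * (2^Suc k * r) ^ DIM('a)))"
      by (rule ennreal_mult[symmetric]) (use r n_def c_def in auto)
    also have "c k * (unit_ball_vol n * (2^Suc k * r) ^ DIM('a))
        = unit_ball_vol n * 2^DIM('a) * r powr (n - b) * q^k"
    proof -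
      have "c k = 2 powr (- (b * k)) * r powr (-b)" unfolding c_def
        using r by (simp add: powr_mult powr_realpow[symmetric] powr_powr mult.commute)
      moreover have "(2^Suc k * r) ^ DIM('a) = 2^DIM('a) * (r powr n * 2 powr (n * k))"
        using r unfolding n_def
        by (simp add: power_mult_distrib powr_realpow[symmetric] powr_powr power_mult[symmetric]
            mult.commute powr_add[symmetric] ring_distribs)
      moreover have "q^k = 2 powr (n * k) * 2 powr (- (b * k))" unfolding q_def
        by (simp add: powr_realpow[symmetric] powr_powr powr_add[symmetric] left_diff_distrib)
      moreover have "r powr (n - b) = r powr n * r powr (-b)" using r by (simp add: powr_add[symmetric])
      ultimately show ?thesis by (simp only: mult_ac)
    qed
    finally show ?thesis .
  qed
  have "(\<integral>\<^sup>+x. ennreal (norm (x - xB) powr (-b)) * indicator (- ball xB r) x \<partial>lborel)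
      \<le> (\<integral>\<^sup>+x. (\<Sum>k. ennreal (c k) * indicator (S k) x) \<partial>lborel)"
    by (rule nn_integral_mono) (rule pointwise)
  also have "\<dots> = (\<Sum>k. ennreal (c k) * emeasure lborel (S k))"
    using S_sets by (simp add: nn_integral_suminf nn_integral_cmult_indicator)
  also have "\<dots> \<le> (\<Sum>k. ennreal (unit_ball_vol n * 2^DIM('a) * r powr (n - b) * q^k))"
    by (intro suminf_le summableI shell)
  also have "\<dots> = ennreal (\<Sum>k. unit_ball_vol n * 2^DIM('a) * r powr (n - b) * q^k)"
    by (rule suminf_ennreal2) (use q n_def in \<open>auto intro!: summable_mult summable_geometric\<close>)
  also have "(\<Sum>k. unit_ball_vol n * 2^DIM('a) * r powr (n - b) * q^k)
      = unit_ball_vol n * 2^DIM('a) * r powr (n - b) / (1 - q)"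
    using suminf_geometric[of q] q suminf_mult[of "\<lambda>k. q^k" "unit_ball_vol n * 2^DIM('a) * r powr (n - b)"]
    by (simp add: summable_geometric)
  finally show ?thesis unfolding q_def n_def by (simp add: field_simps)
qed

text \<open>Young's inequality with the constant threshold \<open>t = C \<omega>_n^(-1/s) r^(-n/p)\<close>, where \<open>\<omega>_n\<close>
  is the volume of the unit ball; it balances (M1) against the volume of \<open>B\<close>.\<close>
lemma weighted_moment_inside_ball:
  fixes g :: "'a::euclidean_space \<Rightarrow> real" and xB :: 'a and p s \<gamma> C r :: real
  assumes g: "g \<in> borel_measurable lborel" "\<And>x. g x \<ge> 0"
    and p: "p > 0" and s: "s \<ge> 1" and C: "C > 0" and r: "r > 0" and \<gamma>: "\<gamma> \<ge> 0"
    and M1: "(\<integral>\<^sup>+ x \<in> ball xB r. ennreal (g x powr s) \<partial>lborel)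
        \<le> ennreal ((C * r powr (real DIM('a) * (1/s - 1/p))) powr s)"
  shows "(\<integral>\<^sup>+x. ennreal (g x * norm (x - xB) powr \<gamma>) * indicator (ball xB r) x \<partial>lborel)
     \<le> ennreal (2 * C * unit_ball_vol DIM('a) powr (1 - 1/s)
                * r powr (\<gamma> + real DIM('a) - real DIM('a) / p))"
proof -
  have [measurable]: "g \<in> borel_measurable borel" "ball xB r \<in> sets borel" using g by simp_all
  define n where "n = real DIM('a)"
  define w where "w = unit_ball_vol n"
  have w: "w > 0" unfolding w_def n_def by simp
  define t where "t = C * w powr (-1/s) * r powr (-n/p)"
  have t: "t > 0" unfolding t_def using C w r by simp
  define A where "A = r powr \<gamma> * t powr (1 - s)"
  define B where "B = r powr \<gamma> * t"
  define X where "X = (C * r powr (n * (1/s - 1/p))) powr s"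
  define Y where "Y = w * r ^ DIM('a)"
  have pointwise: "ennreal (g x * norm (x - xB) powr \<gamma>) * indicator (ball xB r) x
     \<le> ennreal A * (ennreal (g x powr s) * indicator (ball xB r) x)
       + ennreal B * indicator (ball xB r) x" for x
  proof (cases "x \<in> ball xB r")
    case True
    hence "norm (x - xB) < r" by (simp add: dist_norm norm_minus_commute)
    hence "g x * norm (x - xB) powr \<gamma> \<le> g x * r powr \<gamma>"
      using \<gamma> g(2)[of x] by (intro mult_left_mono powr_mono2) auto
    also have "\<dots> \<le> r powr \<gamma> * (g x powr s * t powr (1 - s) + t)"
      using mult_left_mono[OF young_threshold[OF g(2) t s], of "r powr \<gamma>"] by (simp add: mult.commute)
    also have "\<dots> = A * g x powr s + B" unfolding A_def B_def by (simp add: algebra_simps)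
    finally have "ennreal (g x * norm (x - xB) powr \<gamma>) \<le> ennreal (A * g x powr s + B)"
      by (rule ennreal_leI)
    also have "\<dots> = ennreal A * ennreal (g x powr s) + ennreal B"
      unfolding A_def B_def using t r by (simp add: ennreal_mult ennreal_plus)
    finally show ?thesis using True by simp
  qed simp
  have "(\<integral>\<^sup>+x. ennreal (g x * norm (x - xB) powr \<gamma>) * indicator (ball xB r) x \<partial>lborel)
      \<le> ennreal (A * X + B * Y)"
  proof (rule nn_integral_le_lincomb[OF pointwise])
    show "(\<integral>\<^sup>+ x. ennreal (g x powr s) * indicator (ball xB r) x \<partial>lborel) \<le> ennreal X"
      using M1 unfolding X_def n_def .
    show "(\<integral>\<^sup>+ x. indicator (ball xB r) x \<partial>lborel) \<le> ennreal Y"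
      using emeasure_ball[of r xB] r unfolding Y_def w_def n_def by simp
  qed (use t r w in \<open>auto simp: A_def B_def X_def Y_def\<close>)
  also have "A * X + B * Y = 2 * C * w powr (1 - 1/s) * r powr (\<gamma> + n - n/p)"
  proof -
    have "A * X = C * w powr (1 - 1/s) * r powr (\<gamma> + n - n/p)"
      unfolding A_def X_def t_def
      by (rule ln_inj_iff[THEN iffD1]) (use C w r s p in \<open>simp_all add: ln_mult ln_powr powr_mult field_simps\<close>)
    moreover have "B * Y = C * w powr (1 - 1/s) * r powr (\<gamma> + n - n/p)"
      unfolding B_def Y_def t_def
      by (rule ln_inj_iff[THEN iffD1])
         (use C w r s p in \<open>simp_all add: ln_mult ln_powr powr_mult ln_realpow n_def field_simps\<close>)
    ultimately show ?thesis by simp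
  qed
  finally show ?thesis unfolding w_def n_def .
qed

text \<open>Young's inequality with the threshold \<open>t = C r^(-n/p) (|x - xB|/r)^(-e)\<close>,
  \<open>e = (\<lambda> - \<gamma>)/(s - 1)\<close>, turns the first term into a multiple of the (M2) integrand and the
  second into a multiple of \<open>|x - xB|^(-b)\<close> with \<open>b = e - \<gamma> > n\<close>.\<close>
lemma weighted_moment_outside_ball:
  fixes g :: "'a::euclidean_space \<Rightarrow> real" and xB :: 'a and p s lam \<gamma> C r :: real
  assumes g: "g \<in> borel_measurable lborel" "\<And>x. g x \<ge> 0"
    and p: "p > 0" and s: "s > 1" and C: "C > 0" and r: "r > 0"
    and \<gamma>: "\<gamma> < lam / s - real DIM('a) * (s - 1) / s"
    and M2: "(\<integral>\<^sup>+ x \<in> - ball xB r. ennreal (g x powr s * norm (x - xB) powr lam) \<partial>lborel)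
        \<le> ennreal ((C * r powr (lam / s + real DIM('a) * (1/s - 1/p))) powr s)"
  shows "(\<integral>\<^sup>+x. ennreal (g x * norm (x - xB) powr \<gamma>) * indicator (- ball xB r) x \<partial>lborel)
     \<le> ennreal ((C + C * (unit_ball_vol DIM('a) * 2^DIM('a)
                             / (1 - 2 powr (real DIM('a) - ((lam - \<gamma>)/(s - 1) - \<gamma>)))))
          * r powr (\<gamma> + real DIM('a) - real DIM('a) / p))"
proof -
  have [measurable]: "g \<in> borel_measurable borel" "ball xB r \<in> sets borel" using g by simp_all
  define n where "n = real DIM('a)"
  define e where "e = (lam - \<gamma>) / (s - 1)"
  define b where "b = e - \<gamma>"
  have bn: "b > n"
  proof -
    have "n * (s - 1) < lam - \<gamma> - \<gamma> * (s - 1)"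
      using \<gamma> s unfolding n_def by (simp add: field_simps)
    hence "n < (lam - \<gamma> - \<gamma> * (s - 1)) / (s - 1)" using s by (simp add: field_simps)
    also have "\<dots> = b" unfolding b_def e_def using s by (simp add: field_simps)
    finally show ?thesis .
  qed
  define Kr where "Kr = unit_ball_vol n * 2^DIM('a) / (1 - 2 powr (n - b))"
  have Kr: "Kr > 0" unfolding Kr_def using bn powr_less_mono[of "n - b" 0 2] n_def by simp
  define \<tau> where "\<tau> = C * r powr (-n/p)"
  have \<tau>: "\<tau> > 0" unfolding \<tau>_def using C r by simp
  define A where "A = \<tau> powr (1 - s) * r powr (\<gamma> - lam)"
  define B where "B = \<tau> * r powr e"
  define X where "X = (C * r powr (lam / s + n * (1/s - 1/p))) powr s"
  define Y where "Y = Kr * r powr (n - b)"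
  have pointwise: "ennreal (g x * norm (x - xB) powr \<gamma>) * indicator (- ball xB r) x
     \<le> ennreal A * (ennreal (g x powr s * norm (x - xB) powr lam) * indicator (- ball xB r) x)
       + ennreal B * (ennreal (norm (x - xB) powr (-b)) * indicator (- ball xB r) x)" for x
  proof (cases "x \<in> ball xB r")
    case False
    define u where "u = norm (x - xB)"
    have "u \<ge> r" using False by (simp add: u_def dist_norm norm_minus_commute)
    hence u: "u > 0" using r by simp
    define t where "t = \<tau> * (u / r) powr (-e)"
    have t: "t > 0" unfolding t_def using \<tau> u r by simp
    have "g x * u powr \<gamma> \<le> (g x powr s * t powr (1 - s) + t) * u powr \<gamma>"
      using mult_right_mono[OF young_threshold[OF g(2) t less_imp_le[OF s]], of "u powr \<gamma>"] by simp
    also have "\<dots> = g x powr s * (t powr (1 - s) * u powr \<gamma>) + t * u powr \<gamma>"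
      by (simp add: algebra_simps)
    also have "t powr (1 - s) * u powr \<gamma> = A * u powr lam"
      unfolding t_def A_def
      by (rule ln_inj_iff[THEN iffD1])
         (use \<tau> u r s in \<open>simp_all add: ln_mult ln_powr powr_mult ln_div e_def field_simps\<close>)
    also have "t * u powr \<gamma> = B * u powr (-b)"
      unfolding t_def B_def
      by (rule ln_inj_iff[THEN iffD1])
         (use \<tau> u r s in \<open>simp_all add: ln_mult ln_powr powr_mult ln_div b_def field_simps\<close>)
    finally have "ennreal (g x * u powr \<gamma>) \<le> ennreal (A * (g x powr s * u powr lam) + B * u powr (-b))"
      by (intro ennreal_leI) (simp add: algebra_simps)
    also have "\<dots> = ennreal A * ennreal (g x powr s * u powr lam) + ennreal B * ennreal (u powr (-b))"
      unfolding A_def B_def using \<tau> r g(2)[of x] by (simp add: ennreal_mult ennreal_plus)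
    finally show ?thesis using False unfolding u_def by simp
  qed simp
  have "(\<integral>\<^sup>+x. ennreal (g x * norm (x - xB) powr \<gamma>) * indicator (- ball xB r) x \<partial>lborel)
      \<le> ennreal (A * X + B * Y)"
  proof (rule nn_integral_le_lincomb[OF pointwise])
    show "(\<integral>\<^sup>+ x. ennreal (g x powr s * norm (x - xB) powr lam) * indicator (- ball xB r) x \<partial>lborel)
        \<le> ennreal X"
      using M2 unfolding X_def n_def .
    show "(\<integral>\<^sup>+ x. ennreal (norm (x - xB) powr (-b)) * indicator (- ball xB r) x \<partial>lborel) \<le> ennreal Y"
      using nn_integral_norm_powr_outside_ball[OF r, of b xB] bn unfolding Y_def Kr_def n_def by simp
  qed (use \<tau> r Kr in \<open>auto simp: A_def B_def X_def Y_def\<close>)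
  also have "A * X + B * Y = (C + C * Kr) * r powr (\<gamma> + n - n/p)"
  proof -
    have "A * X = C * r powr (\<gamma> + n - n/p)"
      unfolding A_def X_def \<tau>_def
      by (rule ln_inj_iff[THEN iffD1]) (use C r s p in \<open>simp_all add: ln_mult ln_powr powr_mult field_simps\<close>)
    moreover have "B * Y = C * Kr * r powr (\<gamma> + n - n/p)"
      unfolding B_def Y_def \<tau>_def
      by (rule ln_inj_iff[THEN iffD1])
         (use C r s p Kr in \<open>simp_all add: ln_mult ln_powr powr_mult b_def field_simps\<close>)
    ultimately show ?thesis by (simp add: algebra_simps)
  qed
  finally show ?thesis unfolding Kr_def b_def e_def n_def .
qed

lemma weighted_moment_outside_ball_s_eq_1:
  fixes g :: "'a::euclidean_space \<Rightarrow> real" and xB :: 'a and p lam \<gamma> C r :: real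
  assumes g: "g \<in> borel_measurable lborel" "\<And>x. g x \<ge> 0"
    and C: "C \<ge> 0" and r: "r > 0" and \<gamma>: "\<gamma> < lam"
    and M2: "(\<integral>\<^sup>+ x \<in> - ball xB r. ennreal (g x * norm (x - xB) powr lam) \<partial>lborel)
        \<le> ennreal (C * r powr (lam + real DIM('a) * (1 - 1/p)))"
  shows "(\<integral>\<^sup>+x. ennreal (g x * norm (x - xB) powr \<gamma>) * indicator (- ball xB r) x \<partial>lborel)
     \<le> ennreal (C * r powr (\<gamma> + real DIM('a) - real DIM('a) / p))"
proof -
  have [measurable]: "g \<in> borel_measurable borel" "ball xB r \<in> sets borel" using g by simp_all
  define A where "A = r powr (\<gamma> - lam)"
  have pointwise: "ennreal (g x * norm (x - xB) powr \<gamma>) * indicator (- ball xB r) x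
     \<le> ennreal A * (ennreal (g x * norm (x - xB) powr lam) * indicator (- ball xB r) x)" for x
  proof (cases "x \<in> ball xB r")
    case False
    define u where "u = norm (x - xB)"
    have u: "u \<ge> r" using False by (simp add: u_def dist_norm norm_minus_commute)
    have "u powr \<gamma> = u powr lam * u powr (\<gamma> - lam)" using u r by (simp add: powr_add[symmetric])
    also have "\<dots> \<le> u powr lam * A"
      unfolding A_def by (intro mult_left_mono powr_mono2') (use u r \<gamma> in auto)
    finally have "g x * u powr \<gamma> \<le> g x * (u powr lam * A)"
      using g(2)[of x] by (rule mult_left_mono)
    hence "ennreal (g x * u powr \<gamma>) \<le> ennreal (A * (g x * u powr lam))"
      by (intro ennreal_leI) (simp add: mult_ac)
    also have "\<dots> = ennreal A * ennreal (g x * u powr lam)"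
      unfolding A_def using g(2)[of x] by (simp add: ennreal_mult)
    finally show ?thesis using False unfolding u_def by simp
  qed simp
  have "(\<integral>\<^sup>+x. ennreal (g x * norm (x - xB) powr \<gamma>) * indicator (- ball xB r) x \<partial>lborel)
     \<le> ennreal A * (\<integral>\<^sup>+x. ennreal (g x * norm (x - xB) powr lam) * indicator (- ball xB r) x \<partial>lborel)"
    by (subst nn_integral_cmult[symmetric]) (auto intro!: nn_integral_mono pointwise)
  also have "\<dots> \<le> ennreal A * ennreal (C * r powr (lam + real DIM('a) * (1 - 1/p)))"
    using M2 by (intro mult_left_mono) simp_all
  also have "\<dots> = ennreal (C * r powr (\<gamma> + real DIM('a) - real DIM('a) / p))"
    unfolding A_def using r C
    by (subst ennreal_mult[symmetric]) (simp_all add: powr_add[symmetric] algebra_simps)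
  finally show ?thesis .
qed

text \<open>The absolute value keeps this a valid bound at \<open>s = 1\<close>, where the outer exponent
  \<open>(\<lambda> - \<gamma>)/(s - 1)\<close> is the junk value \<open>(\<lambda> - \<gamma>)/0 = 0\<close>.\<close>
definition weighted_moment_const :: "nat \<Rightarrow> real \<Rightarrow> real \<Rightarrow> real \<Rightarrow> real \<Rightarrow> real" where
  "weighted_moment_const n s lam \<gamma> C = 2 * C * unit_ball_vol n powr (1 - 1/s) + C
     + C * \<bar>unit_ball_vol n * 2^n / (1 - 2 powr (n - ((lam - \<gamma>)/(s - 1) - \<gamma>)))\<bar>"

lemma weighted_moment_const_nonneg: "C \<ge> 0 \<Longrightarrow> weighted_moment_const n s lam \<gamma> C \<ge> 0"
  unfolding weighted_moment_const_def by simp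

lemma weighted_moment_bound:
  fixes g :: "'a::euclidean_space \<Rightarrow> real" and xB :: 'a and p s lam \<gamma> C r :: real
  assumes g: "g \<in> borel_measurable lborel" "\<And>x. g x \<ge> 0"
    and p: "p > 0" and s: "s \<ge> 1" and C: "C > 0" and r: "r > 0" and \<gamma>: "\<gamma> \<ge> 0"
    and \<gamma>_lam: "\<gamma> < lam / s - real DIM('a) * (s - 1) / s"
    and M1: "(\<integral>\<^sup>+ x \<in> ball xB r. ennreal (g x powr s) \<partial>lborel)
        \<le> ennreal ((C * r powr (real DIM('a) * (1/s - 1/p))) powr s)"
    and M2: "(\<integral>\<^sup>+ x \<in> - ball xB r. ennreal (g x powr s * norm (x - xB) powr lam) \<partial>lborel)
        \<le> ennreal ((C * r powr (lam / s + real DIM('a) * (1/s - 1/p))) powr s)"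
  shows "(\<integral>\<^sup>+x. ennreal (g x * norm (x - xB) powr \<gamma>) \<partial>lborel)
     \<le> ennreal (weighted_moment_const DIM('a) s lam \<gamma> C * r powr (\<gamma> - gamma_p DIM('a) p))"
proof -
  have [measurable]: "g \<in> borel_measurable borel" "ball xB r \<in> sets borel" using g by simp_all
  define n where "n = DIM('a)"
  define R where "R = r powr (\<gamma> - gamma_p n p)"
  have R: "R > 0" unfolding R_def using r by simp
  have R_eq: "r powr (\<gamma> + real n - real n / p) = R"
    unfolding R_def gamma_p_def by (simp add: algebra_simps)
  define Kr where "Kr = unit_ball_vol n * 2^n / (1 - 2 powr (n - ((lam - \<gamma>)/(s - 1) - \<gamma>)))"
  have inside: "(\<integral>\<^sup>+x. ennreal (g x * norm (x - xB) powr \<gamma>) * indicator (ball xB r) x \<partial>lborel)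
       \<le> ennreal (2 * C * unit_ball_vol n powr (1 - 1/s) * R)"
    using weighted_moment_inside_ball[OF g p s C r \<gamma> M1] unfolding R_eq[unfolded n_def] n_def .
  have outside: "(\<integral>\<^sup>+x. ennreal (g x * norm (x - xB) powr \<gamma>) * indicator (- ball xB r) x \<partial>lborel)
       \<le> ennreal ((C + C * \<bar>Kr\<bar>) * R)"
  proof (cases "s = 1")
    case True
    have "\<gamma> < lam" using \<gamma>_lam True by simp
    moreover have "(\<integral>\<^sup>+ x \<in> - ball xB r. ennreal (g x * norm (x - xB) powr lam) \<partial>lborel)
        \<le> ennreal (C * r powr (lam + real DIM('a) * (1 - 1/p)))"
      using M2 True g(2) C r by simp
    ultimately have "(\<integral>\<^sup>+x. ennreal (g x * norm (x - xB) powr \<gamma>) * indicator (- ball xB r) x \<partial>lborel)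
        \<le> ennreal (C * R)"
      unfolding R_eq[unfolded n_def, symmetric]
      by (rule weighted_moment_outside_ball_s_eq_1[OF g less_imp_le[OF C] r])
    also have "\<dots> \<le> ennreal ((C + C * \<bar>Kr\<bar>) * R)"
      using C R by (intro ennreal_leI mult_right_mono) auto
    finally show ?thesis .
  next
    case False
    hence "s > 1" using s by simp
    from weighted_moment_outside_ball[OF g p this C r \<gamma>_lam M2]
    have "(\<integral>\<^sup>+x. ennreal (g x * norm (x - xB) powr \<gamma>) * indicator (- ball xB r) x \<partial>lborel)
        \<le> ennreal ((C + C * Kr) * R)"
      unfolding R_eq[unfolded n_def] n_def Kr_def .
    also have "\<dots> \<le> ennreal ((C + C * \<bar>Kr\<bar>) * R)"
      using C R by (intro ennreal_leI mult_right_mono add_left_mono) auto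
    finally show ?thesis .
  qed
  have "(\<integral>\<^sup>+x. ennreal (g x * norm (x - xB) powr \<gamma>) \<partial>lborel)
     = (\<integral>\<^sup>+x. ennreal (g x * norm (x - xB) powr \<gamma>) * indicator (ball xB r) x
          + ennreal (g x * norm (x - xB) powr \<gamma>) * indicator (- ball xB r) x \<partial>lborel)"
    by (intro nn_integral_cong) (auto split: split_indicator)
  also have "\<dots> = (\<integral>\<^sup>+x. ennreal (g x * norm (x - xB) powr \<gamma>) * indicator (ball xB r) x \<partial>lborel)
          + (\<integral>\<^sup>+x. ennreal (g x * norm (x - xB) powr \<gamma>) * indicator (- ball xB r) x \<partial>lborel)"
    by (rule nn_integral_add) measurable
  also have "\<dots> \<le> ennreal (2 * C * unit_ball_vol n powr (1 - 1/s) * R) + ennreal ((C + C * \<bar>Kr\<bar>) * R)"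
    using inside outside by (rule add_mono)
  also have "\<dots> = ennreal (weighted_moment_const n s lam \<gamma> C * R)"
    unfolding weighted_moment_const_def Kr_def using C R
    by (subst ennreal_plus[symmetric]) (auto simp: algebra_simps)
  finally show ?thesis unfolding R_def n_def .
qed

section \<open>Multinomial expansion and Taylor remainder\<close>

text \<open>The multinomial expansion of \<open>(y \<bullet> \<xi>)^k\<close> is indexed by words \<open>g\<close> of length \<open>k\<close> over the
  coordinates; \<open>letter_count k g\<close> is the multi-index of letter multiplicities of \<open>g\<close>.\<close>
definition letter_count :: "nat \<Rightarrow> (nat \<Rightarrow> 'n::finite) \<Rightarrow> 'n \<Rightarrow> nat" where
  "letter_count k g i = card {j \<in> {..<k}. g j = i}"

lemma prod_eq_prod_power_letter_count:
  fixes a :: "'n::finite \<Rightarrow> 'b::comm_monoid_mult"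
  shows "(\<Prod>j<k. a (g j)) = (\<Prod>i\<in>UNIV. a i ^ letter_count k g i)"
proof -
  have "(\<Prod>j<k. a (g j)) = (\<Prod>i\<in>UNIV. \<Prod>j\<in>{j \<in> {..<k}. g j = i}. a (g j))"
    by (rule prod.group[symmetric]) auto
  also have "\<dots> = (\<Prod>i\<in>UNIV. \<Prod>j\<in>{j \<in> {..<k}. g j = i}. a i)"
    by (intro prod.cong) auto
  finally show ?thesis unfolding letter_count_def by simp
qed

lemma mi_order_letter_count: "mi_order (letter_count k (g :: nat \<Rightarrow> 'n::finite)) = k"
proof -
  have "(\<Sum>i\<in>(UNIV::'n set). \<Sum>j\<in>{j \<in> {..<k}. g j = i}. (1::nat)) = (\<Sum>j<k. 1)"
    by (rule sum.group) auto
  thus ?thesis unfolding mi_order_def letter_count_def by simp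
qed

lemma inner_power_multinomial:
  fixes y \<xi> :: "real^'n"
  shows "(y \<bullet> \<xi>)^k = (\<Sum>g \<in> PiE {..<k} (\<lambda>_. UNIV).
            mi_pow \<xi> (letter_count k g) * mi_pow y (letter_count k g))"
proof -
  have "(y \<bullet> \<xi>)^k = (\<Prod>j\<in>{..<k}. \<Sum>i\<in>UNIV. y$i * \<xi>$i)"
    by (simp add: inner_vec_def)
  also have "\<dots> = (\<Sum>g \<in> PiE {..<k} (\<lambda>_. UNIV). \<Prod>j<k. y$(g j) * \<xi>$(g j))"
    by (rule prod_sum_PiE) auto
  also have "\<dots> = (\<Sum>g \<in> PiE {..<k} (\<lambda>_. UNIV). mi_pow \<xi> (letter_count k g) * mi_pow y (letter_count k g))"
  proof (rule sum.cong[OF refl])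
    fix g :: "nat \<Rightarrow> 'n"
    have "(\<Prod>j<k. y$(g j) * \<xi>$(g j)) = (\<Prod>i\<in>UNIV. (y$i * \<xi>$i) ^ letter_count k g i)"
      by (rule prod_eq_prod_power_letter_count)
    thus "(\<Prod>j<k. y$(g j) * \<xi>$(g j)) = mi_pow \<xi> (letter_count k g) * mi_pow y (letter_count k g)"
      unfolding mi_pow_def by (simp add: power_mult_distrib prod.distrib mult.commute)
  qed
  finally show ?thesis .
qed

lemma abs_mi_pow_le: "\<bar>mi_pow (y::real^'n::finite) \<alpha>\<bar> \<le> norm y ^ mi_order \<alpha>"
proof -
  have "\<bar>mi_pow y \<alpha>\<bar> = (\<Prod>i\<in>UNIV. \<bar>y$i\<bar> ^ \<alpha> i)"
    unfolding mi_pow_def by (simp add: abs_prod power_abs)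
  also have "\<dots> \<le> (\<Prod>i\<in>UNIV. norm y ^ \<alpha> i)"
    by (intro prod_mono conjI power_mono) (auto simp: component_le_norm_cart[of y, simplified])
  also have "\<dots> = norm y ^ mi_order \<alpha>" unfolding mi_order_def by (simp add: power_sum)
  finally show ?thesis .
qed

lemma finite_mi_order_le: "finite {\<alpha> :: 'n::finite \<Rightarrow> nat. mi_order \<alpha> \<le> N}"
proof (rule finite_subset)
  show "{\<alpha> :: 'n \<Rightarrow> nat. mi_order \<alpha> \<le> N} \<subseteq> PiE UNIV (\<lambda>_. {..N})"
  proof
    fix \<alpha> :: "'n \<Rightarrow> nat" assume "\<alpha> \<in> {\<alpha>. mi_order \<alpha> \<le> N}"
    hence "\<alpha> i \<le> N" for i unfolding mi_order_def using member_le_sum[of i UNIV \<alpha>] by auto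
    thus "\<alpha> \<in> PiE UNIV (\<lambda>_. {..N})" by auto
  qed
qed (rule finite_PiE; simp)

lemma divide_fact_le: "(a::real) \<ge> 0 \<Longrightarrow> a / fact n \<le> a"
  by (simp add: divide_le_eq fact_ge_1 mult_le_cancel_left1)

lemma iexp_taylor_remainder_le_powr:
  assumes "real N < \<gamma>" "\<gamma> \<le> real N + 1"
  shows "cmod (iexp x - (\<Sum>k\<le>N. (\<i> * x)^k / fact k)) \<le> 2 * \<bar>x\<bar> powr \<gamma>"
proof (cases "\<bar>x\<bar> \<le> 1")
  case True
  have "cmod (iexp x - (\<Sum>k\<le>N. (\<i> * x)^k / fact k)) \<le> \<bar>x\<bar>^Suc N / fact (Suc N)"
    by (rule iexp_approx1)
  also have "\<dots> \<le> \<bar>x\<bar>^Suc N"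
    by (rule divide_fact_le) simp
  also have "\<dots> \<le> \<bar>x\<bar> powr \<gamma>"
  proof (cases "x = 0")
    case False
    hence "\<bar>x\<bar>^Suc N = \<bar>x\<bar> powr real (Suc N)" by (subst powr_realpow) auto
    also have "\<dots> \<le> \<bar>x\<bar> powr \<gamma>" by (rule powr_mono') (use True assms in auto)
    finally show ?thesis .
  qed (use assms in simp)
  finally show ?thesis by (smt (verit) powr_ge_zero)
next
  case False
  have "cmod (iexp x - (\<Sum>k\<le>N. (\<i> * x)^k / fact k)) \<le> 2 * \<bar>x\<bar>^N / fact N"
    by (rule iexp_approx2)
  also have "\<dots> \<le> 2 * \<bar>x\<bar>^N"
    by (rule divide_fact_le) simp
  also have "\<bar>x\<bar>^N = \<bar>x\<bar> powr real N" using False by (subst powr_realpow) auto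
  also have "\<dots> \<le> \<bar>x\<bar> powr \<gamma>" by (rule powr_mono) (use False assms in auto)
  finally show ?thesis by simp
qed

section \<open>The Fourier transform\<close>

lemma integrable_moment:
  fixes M :: "real^'n \<Rightarrow> complex"
  assumes "M \<in> borel_measurable lborel"
    and "integrable lborel (\<lambda>x. norm (M x) * norm (x - xB) ^ mi_order \<alpha>)"
  shows "integrable lborel (\<lambda>x. M x * of_real (mi_pow (x - xB) \<alpha>))"
proof (rule Bochner_Integration.integrable_bound[OF assms(2)])
  have "(\<lambda>x. mi_pow (x - xB) \<alpha>) \<in> borel_measurable borel"
    unfolding mi_pow_def by (intro borel_measurable_continuous_onI continuous_intros)
  thus "(\<lambda>x. M x * of_real (mi_pow (x - xB) \<alpha>)) \<in> borel_measurable lborel"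
    using assms(1) by simp
  show "AE x in lborel. norm (M x * of_real (mi_pow (x - xB) \<alpha>)) \<le> norm (norm (M x) * norm (x - xB) ^ mi_order \<alpha>)"
    by (intro AE_I2) (simp add: norm_mult mult_left_mono abs_mi_pow_le)
qed

lemma integrable_inner_power_moment:
  fixes M :: "real^'n \<Rightarrow> complex"
  assumes "M \<in> borel_measurable lborel"
    and "integrable lborel (\<lambda>x. norm (M x) * norm (x - xB) ^ k)"
  shows "integrable lborel (\<lambda>x. M x * of_real (((x - xB) \<bullet> \<xi>) ^ k))"
proof (rule Bochner_Integration.integrable_bound)
  show "integrable lborel (\<lambda>x. norm \<xi> ^ k * (norm (M x) * norm (x - xB) ^ k))"
    using assms(2) by simp
  show "(\<lambda>x. M x * of_real (((x - xB) \<bullet> \<xi>) ^ k)) \<in> borel_measurable lborel"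
    using assms(1) by measurable
  have "norm (M x) * \<bar>(x - xB) \<bullet> \<xi>\<bar> ^ k \<le> norm (M x) * (norm (x - xB) * norm \<xi>) ^ k" for x
    by (intro mult_left_mono power_mono Cauchy_Schwarz_ineq2) auto
  thus "AE x in lborel. norm (M x * of_real (((x - xB) \<bullet> \<xi>) ^ k))
      \<le> norm (norm \<xi> ^ k * (norm (M x) * norm (x - xB) ^ k))"
    by (intro AE_I2) (simp add: norm_mult norm_power power_mult_distrib mult_ac)
qed

lemma norm_inner_power_moment_le:
  fixes M :: "real^'n \<Rightarrow> complex"
  assumes M: "M \<in> borel_measurable lborel"
    and moments: "\<And>m. m \<le> N \<Longrightarrow> integrable lborel (\<lambda>x. norm (M x) * norm (x - xB) ^ m)"
    and k: "k \<le> N"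
  shows "norm (\<integral>x. M x * of_real (((x - xB) \<bullet> \<xi>) ^ k) \<partial>lborel)
    \<le> real CARD('n) ^ k * (\<Sum>\<alpha>\<in>{\<alpha>. mi_order \<alpha> \<le> N}.
          norm \<xi> ^ mi_order \<alpha> * norm (\<integral>x. M x * of_real (mi_pow (x - xB) \<alpha>) \<partial>lborel))"
proof -
  define G where "G = PiE {..<k} (\<lambda>_. UNIV :: 'n set)"
  define \<mu> where "\<mu> \<alpha> = (\<integral>x. M x * of_real (mi_pow (x - xB) \<alpha>) \<partial>lborel)" for \<alpha>
  define T where "T = (\<Sum>\<alpha>\<in>{\<alpha>. mi_order \<alpha> \<le> N}. norm \<xi> ^ mi_order \<alpha> * norm (\<mu> \<alpha>))"
  have order: "mi_order (letter_count k g) \<le> N" for g :: "nat \<Rightarrow> 'n"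
    using k by (simp add: mi_order_letter_count)
  have "(\<integral>x. M x * of_real (((x - xB) \<bullet> \<xi>) ^ k) \<partial>lborel)
      = (\<integral>x. (\<Sum>g\<in>G. of_real (mi_pow \<xi> (letter_count k g))
                      * (M x * of_real (mi_pow (x - xB) (letter_count k g)))) \<partial>lborel)"
    by (intro Bochner_Integration.integral_cong refl)
       (simp add: inner_power_multinomial G_def sum_distrib_left mult_ac)
  also have "\<dots> = (\<Sum>g\<in>G. of_real (mi_pow \<xi> (letter_count k g)) * \<mu> (letter_count k g))"
    unfolding \<mu>_def using order
    by (subst Bochner_Integration.integral_sum)
       (auto intro!: Bochner_Integration.integrable_mult_right integrable_moment M moments)
  also have "norm \<dots> \<le> (\<Sum>g\<in>G. norm \<xi> ^ mi_order (letter_count k g) * norm (\<mu> (letter_count k g)))"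
    by (rule order_trans[OF norm_sum sum_mono])
       (simp add: norm_mult mult_right_mono abs_mi_pow_le)
  also have "\<dots> \<le> (\<Sum>g\<in>G. T)"
    unfolding T_def using order
    by (intro sum_mono member_le_sum finite_mi_order_le) auto
  also have "\<dots> = real CARD('n) ^ k * T" unfolding G_def by (simp add: card_PiE)
  finally show ?thesis unfolding T_def \<mu>_def .
qed

lemma fourier_transform_recentred:
  "fourier_transform M \<xi>
     = cis (-2*pi*(xB \<bullet> \<xi>)) * (\<integral>x. M x * iexp (-2*pi*((x - xB) \<bullet> \<xi>)) \<partial>lborel)"
proof -
  have "M x * cis (-2*pi*(x \<bullet> \<xi>)) = cis (-2*pi*(xB \<bullet> \<xi>)) * (M x * iexp (-2*pi*((x - xB) \<bullet> \<xi>)))" for x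
  proof -
    define \<theta> where "\<theta> = -2*pi*((x - xB) \<bullet> \<xi>)"
    have "cis (-2*pi*(x \<bullet> \<xi>)) = cis (-2*pi*(xB \<bullet> \<xi>)) * cis \<theta>"
      unfolding \<theta>_def by (simp add: cis_mult inner_diff_left algebra_simps)
    thus ?thesis unfolding \<theta>_def[symmetric] by (simp add: cis_conv_exp mult_ac)
  qed
  hence "fourier_transform M \<xi>
      = (\<integral>x. cis (-2*pi*(xB \<bullet> \<xi>)) * (M x * iexp (-2*pi*((x - xB) \<bullet> \<xi>))) \<partial>lborel)"
    unfolding fourier_transform_def by (intro Bochner_Integration.integral_cong refl)
  thus ?thesis by (simp only: integral_mult_right_zero)
qed

lemma taylor_polynomial_moment_expansion:
  "M x * (\<Sum>k\<le>N. (\<i> * of_real (-2*pi*((x - xB) \<bullet> \<xi>)))^k / fact k)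
     = (\<Sum>k\<le>N. (- 2 * pi * \<i>)^k / fact k * (M x * of_real (((x - xB) \<bullet> \<xi>)^k)))"
proof -
  have base: "\<i> * of_real (-2*pi*t) = (- 2 * pi * \<i>) * of_real t" for t :: real
    by simp
  show ?thesis
    unfolding base sum_distrib_left power_mult_distrib of_real_power by (simp add: mult_ac)
qed

lemma taylor_polynomial_part:
  fixes M :: "real^'n \<Rightarrow> complex" and xB \<xi> :: "real^'n"
  assumes M: "M \<in> borel_measurable lborel"
    and moments: "\<And>m. m \<le> N \<Longrightarrow> integrable lborel (\<lambda>x. norm (M x) * norm (x - xB) ^ m)"
  defines "P \<equiv> \<lambda>x. M x * (\<Sum>k\<le>N. (\<i> * of_real (-2*pi*((x - xB) \<bullet> \<xi>)))^k / fact k)"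
  shows "integrable lborel P"
    and "norm (\<integral>x. P x \<partial>lborel) \<le> (\<Sum>k\<le>N. (2*pi*CARD('n))^k / fact k)
           * (\<Sum>\<alpha>\<in>{\<alpha>. mi_order \<alpha> \<le> N}.
                norm \<xi> ^ mi_order \<alpha> * norm (\<integral>x. M x * of_real (mi_pow (x - xB) \<alpha>) \<partial>lborel))"
proof -
  define T where "T = (\<Sum>\<alpha>\<in>{\<alpha>. mi_order \<alpha> \<le> N}.
      norm \<xi> ^ mi_order \<alpha> * norm (\<integral>x. M x * of_real (mi_pow (x - xB) \<alpha>) \<partial>lborel))"
  define c :: "nat \<Rightarrow> complex" where "c k = (- 2 * pi * \<i>)^k / fact k" for k
  define \<mu> where "\<mu> k = (\<integral>x. M x * of_real (((x - xB) \<bullet> \<xi>)^k) \<partial>lborel)" for k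
  have P_eq: "P = (\<lambda>x. \<Sum>k\<le>N. c k * (M x * of_real (((x - xB) \<bullet> \<xi>)^k)))"
    unfolding P_def c_def taylor_polynomial_moment_expansion ..
  have terms: "integrable lborel (\<lambda>x. M x * of_real (((x - xB) \<bullet> \<xi>)^k))" if "k \<le> N" for k
    using integrable_inner_power_moment[OF M moments[OF that]] .
  show "integrable lborel P"
    unfolding P_eq by (intro Bochner_Integration.integrable_sum Bochner_Integration.integrable_mult_right terms) simp
  have "(\<integral>x. P x \<partial>lborel) = (\<Sum>k\<le>N. c k * \<mu> k)"
    unfolding P_eq \<mu>_def
    by (subst Bochner_Integration.integral_sum)
       (auto intro!: Bochner_Integration.integrable_mult_right terms simp del: of_real_power)
  also have "norm \<dots> \<le> (\<Sum>k\<le>N. norm (c k) * norm (\<mu> k))"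
    by (rule order_trans[OF norm_sum]) (simp add: norm_mult)
  also have "\<dots> \<le> (\<Sum>k\<le>N. (2*pi)^k / fact k * (real CARD('n)^k * T))"
  proof (rule sum_mono)
    fix k assume "k \<in> {..N}"
    hence "norm (\<mu> k) \<le> real CARD('n)^k * T"
      unfolding \<mu>_def T_def by (intro norm_inner_power_moment_le M moments) auto
    moreover have "norm (c k) = (2*pi)^k / fact k"
      unfolding c_def by (simp add: norm_mult norm_divide norm_power)
    ultimately show "norm (c k) * norm (\<mu> k) \<le> (2*pi)^k / fact k * (real CARD('n)^k * T)"
      by (metis mult_left_mono norm_ge_zero)
  qed
  also have "\<dots> = (\<Sum>k\<le>N. (2*pi*CARD('n))^k / fact k) * T"
    unfolding sum_distrib_right by (intro sum.cong refl) (simp add: power_mult_distrib)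
  finally show "norm (\<integral>x. P x \<partial>lborel) \<le> (\<Sum>k\<le>N. (2*pi*CARD('n))^k / fact k) * T" .
qed

lemma iexp_inner_taylor_remainder_le:
  fixes y \<xi> :: "'a::real_inner"
  assumes "real N < \<gamma>" "\<gamma> \<le> real N + 1"
  shows "cmod (iexp (-2*pi*(y \<bullet> \<xi>)) - (\<Sum>k\<le>N. (\<i> * of_real (-2*pi*(y \<bullet> \<xi>)))^k / fact k))
     \<le> 2 * (2*pi) powr \<gamma> * norm \<xi> powr \<gamma> * norm y powr \<gamma>"
proof -
  have bound: "\<bar>-2*pi*(y \<bullet> \<xi>)\<bar> \<le> 2*pi*(norm y * norm \<xi>)"
    using Cauchy_Schwarz_ineq2[of y \<xi>] by (simp add: abs_mult)
  have "\<bar>-2*pi*(y \<bullet> \<xi>)\<bar> powr \<gamma> \<le> (2*pi*(norm y * norm \<xi>)) powr \<gamma>"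
    by (rule powr_mono2) (use assms bound in auto)
  also have "\<dots> = (2*pi) powr \<gamma> * norm \<xi> powr \<gamma> * norm y powr \<gamma>"
    by (simp add: powr_mult mult_ac)
  finally show ?thesis using iexp_taylor_remainder_le_powr[OF assms, of "-2*pi*(y \<bullet> \<xi>)"] by simp
qed

lemma norm_fourier_transform_le_moments:
  fixes M :: "real^'n \<Rightarrow> complex" and N :: nat
  assumes M: "M \<in> borel_measurable lborel"
    and moments: "\<And>m. m \<le> N \<Longrightarrow> integrable lborel (\<lambda>x. norm (M x) * norm (x - xB) ^ m)"
    and weighted: "integrable lborel (\<lambda>x. norm (M x) * norm (x - xB) powr \<gamma>)"
    and \<gamma>: "real N < \<gamma>" "\<gamma> \<le> real N + 1"
  shows "norm (fourier_transform M \<xi>) \<le> (\<Sum>k\<le>N. (2*pi*CARD('n))^k / fact k)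
      * (\<Sum>\<alpha>\<in>{\<alpha>. mi_order \<alpha> \<le> N}.
           norm \<xi> ^ mi_order \<alpha> * norm (\<integral>x. M x * of_real (mi_pow (x - xB) \<alpha>) \<partial>lborel))
    + 2 * (2*pi) powr \<gamma> * norm \<xi> powr \<gamma> * (\<integral>x. norm (M x) * norm (x - xB) powr \<gamma> \<partial>lborel)"
proof -
  define \<theta> where "\<theta> x = -2*pi*((x - xB) \<bullet> \<xi>)" for x
  define F where "F x = M x * iexp (\<theta> x)" for x
  define P where "P x = M x * (\<Sum>k\<le>N. (\<i> * of_real (\<theta> x))^k / fact k)" for x
  define c where "c = 2 * (2*pi) powr \<gamma> * norm \<xi> powr \<gamma>"
  note P = taylor_polynomial_part[where \<xi> = \<xi> and N = N, OF M moments, folded \<theta>_def, folded P_def]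
  have F: "integrable lborel F"
  proof (rule Bochner_Integration.integrable_bound[OF moments[of 0]])
    show "F \<in> borel_measurable lborel" unfolding F_def \<theta>_def using M by measurable
    show "AE x in lborel. norm (F x) \<le> norm (norm (M x) * norm (x - xB) ^ 0)"
      by (intro AE_I2) (simp add: F_def norm_mult)
  qed simp
  have FP: "integrable lborel (\<lambda>x. F x - P x)" using F P(1) by simp
  have remainder: "norm (F x - P x) \<le> c * (norm (M x) * norm (x - xB) powr \<gamma>)" for x
  proof -
    have "norm (F x - P x) = norm (M x) * cmod (iexp (\<theta> x) - (\<Sum>k\<le>N. (\<i> * of_real (\<theta> x))^k / fact k))"
      unfolding F_def P_def by (simp only: right_diff_distrib[symmetric] norm_mult)
    also have "\<dots> \<le> norm (M x) * (c * norm (x - xB) powr \<gamma>)"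
      unfolding \<theta>_def c_def by (intro mult_left_mono iexp_inner_taylor_remainder_le \<gamma>) simp
    finally show ?thesis by (simp only: mult_ac)
  qed
  have "norm (fourier_transform M \<xi>) = norm (\<integral>x. F x \<partial>lborel)"
    unfolding fourier_transform_recentred[of M \<xi> xB] F_def \<theta>_def by (simp only: norm_mult norm_cis mult_1_left)
  also have "(\<integral>x. F x \<partial>lborel) = (\<integral>x. P x + (F x - P x) \<partial>lborel)"
    by simp
  also have "\<dots> = (\<integral>x. P x \<partial>lborel) + (\<integral>x. F x - P x \<partial>lborel)"
    by (rule Bochner_Integration.integral_add[OF P(1) FP])
  also have "norm \<dots> \<le> norm (\<integral>x. P x \<partial>lborel) + norm (\<integral>x. F x - P x \<partial>lborel)"
    by (rule norm_triangle_ineq)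
  also have "norm (\<integral>x. F x - P x \<partial>lborel) \<le> (\<integral>x. c * (norm (M x) * norm (x - xB) powr \<gamma>) \<partial>lborel)"
    by (intro Bochner_Integration.integral_norm_bound_integral FP remainder Bochner_Integration.integrable_mult_right weighted)
  finally show ?thesis using P(2) unfolding c_def by simp
qed

lemma integrable_indicator_of_nn_integral_powr:
  fixes g :: "'a \<Rightarrow> real"
  assumes g: "g \<in> borel_measurable M" "\<And>x. g x \<ge> 0" and s: "s \<ge> 1"
    and A: "A \<in> sets M" "emeasure M A < \<infinity>"
    and finite: "(\<integral>\<^sup>+ x \<in> A. ennreal (g x powr s) \<partial>M) < \<infinity>"
  shows "integrable M (\<lambda>x. g x * indicator A x)"
proof (rule integrableI_nonneg)
  show "(\<lambda>x. g x * indicator A x) \<in> borel_measurable M" using g(1) A(1) by measurable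
  show "AE x in M. 0 \<le> g x * indicator A x" using g(2) by simp
  have "ennreal (g x * indicator A x) \<le> ennreal (g x powr s) * indicator A x + indicator A x" for x
  proof (cases "x \<in> A")
    case True
    have "ennreal (g x) \<le> ennreal (g x powr s + 1)"
      using young_threshold[OF g(2)[of x] zero_less_one s] by (intro ennreal_leI) simp
    thus ?thesis using True by (simp add: ennreal_plus)
  qed simp
  hence "(\<integral>\<^sup>+x. ennreal (g x * indicator A x) \<partial>M)
      \<le> (\<integral>\<^sup>+x. ennreal (g x powr s) * indicator A x \<partial>M) + emeasure M A"
    using g(1) A(1) by (subst nn_integral_indicator[symmetric, OF A(1)], subst nn_integral_add[symmetric])
                       (auto intro: nn_integral_mono)
  also have "\<dots> < \<infinity>" using finite A(2) by simp
  finally show "(\<integral>\<^sup>+x. ennreal (g x * indicator A x) \<partial>M) < \<infinity>" .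
qed

text \<open>Off the ball \<open>1 \<le> (|x - xB|/r)^\<gamma>\<close>, so \<open>|x - xB|^m\<close> is dominated by the indicator of the
  ball plus a multiple of \<open>|x - xB|^\<gamma>\<close>.\<close>
lemma integrable_mult_norm_power:
  fixes g :: "'a::euclidean_space \<Rightarrow> real"
  assumes g: "g \<in> borel_measurable lborel" "\<And>x. g x \<ge> 0" and r: "r > 0"
    and on_ball: "integrable lborel (\<lambda>x. g x * indicator (ball xB r) x)"
    and weighted: "integrable lborel (\<lambda>x. g x * norm (x - xB) powr \<gamma>)"
    and m: "real m \<le> \<gamma>"
  shows "integrable lborel (\<lambda>x. g x * norm (x - xB) ^ m)"
proof (rule Bochner_Integration.integrable_bound)
  show "integrable lborel (\<lambda>x. g x * indicator (ball xB r) x + (1 + r powr (-\<gamma>)) * (g x * norm (x - xB) powr \<gamma>))"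
    using on_ball weighted by simp
  show "(\<lambda>x. g x * norm (x - xB) ^ m) \<in> borel_measurable lborel" using g(1) by measurable
  have bound: "norm (x - xB) ^ m \<le> indicator (ball xB r) x + (1 + r powr (-\<gamma>)) * norm (x - xB) powr \<gamma>" for x
  proof -
    define u where "u = norm (x - xB)"
    have "1 \<le> indicator (ball xB r) x + r powr (-\<gamma>) * u powr \<gamma>"
    proof (cases "x \<in> ball xB r")
      case False
      hence "r \<le> u" by (simp add: u_def dist_norm norm_minus_commute)
      hence "r powr (-\<gamma>) * r powr \<gamma> \<le> r powr (-\<gamma>) * u powr \<gamma>"
        using r m by (intro mult_left_mono powr_mono2) auto
      thus ?thesis using r False by (simp add: powr_add[symmetric])
    qed simp
    hence "u ^ m \<le> indicator (ball xB r) x + (1 + r powr (-\<gamma>)) * u powr \<gamma>"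
    proof (cases "u \<le> 1")
      case True
      hence "u ^ m \<le> 1" by (intro power_le_one) (auto simp: u_def)
      also note \<open>1 \<le> indicator (ball xB r) x + r powr (-\<gamma>) * u powr \<gamma>\<close>
      also have "indicator (ball xB r) x + r powr (-\<gamma>) * u powr \<gamma>
          \<le> indicator (ball xB r) x + (1 + r powr (-\<gamma>)) * u powr \<gamma>"
        by (simp add: algebra_simps)
      finally show ?thesis .
    next
      case False
      hence "u ^ m = u powr real m" by (subst powr_realpow) auto
      also have "\<dots> \<le> u powr \<gamma>" by (rule powr_mono) (use False m in auto)
      also have "\<dots> \<le> indicator (ball xB r) x + (1 + r powr (-\<gamma>)) * u powr \<gamma>"
        by (simp add: algebra_simps)
      finally show ?thesis .
    qed
    thus ?thesis by (simp only: u_def)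
  qed
  have "g x * norm (x - xB) ^ m
      \<le> g x * indicator (ball xB r) x + (1 + r powr (-\<gamma>)) * (g x * norm (x - xB) powr \<gamma>)" for x
    using mult_left_mono[OF bound g(2)] by (simp add: algebra_simps)
  thus "AE x in lborel. norm (g x * norm (x - xB) ^ m)
      \<le> norm (g x * indicator (ball xB r) x + (1 + r powr (-\<gamma>)) * (g x * norm (x - xB) powr \<gamma>))"
    using g(2) by (intro AE_I2) (auto intro: order_trans[OF _ abs_ge_self])
qed

lemma integrable_integral_le_of_nn_integral_le:
  fixes f :: "'a \<Rightarrow> real"
  assumes "f \<in> borel_measurable M" "\<And>x. f x \<ge> 0" "(\<integral>\<^sup>+x. ennreal (f x) \<partial>M) \<le> ennreal c" "c \<ge> 0"
  shows "integrable M f" and "integral\<^sup>L M f \<le> c"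
proof -
  show f: "integrable M f"
    using assms by (intro integrableI_nonneg) (auto simp: order.strict_trans1)
  have "ennreal (integral\<^sup>L M f) \<le> ennreal c"
    using assms(3) by (subst nn_integral_eq_integral[OF f, symmetric]) (simp_all add: assms(2))
  thus "integral\<^sup>L M f \<le> c" using assms(4) by simp
qed

lemma norm_fourier_transform_bound:
  fixes M :: "real^'n \<Rightarrow> complex" and xB \<xi> :: "real^'n" and N :: nat
  assumes M: "M \<in> borel_measurable lborel" and r: "r > 0"
    and p: "p > 0" and s: "s \<ge> 1" and C: "C > 0"
    and \<gamma>: "real N < \<gamma>" "\<gamma> \<le> real N + 1" "\<gamma> < lam / s - real CARD('n) * (s - 1) / s"
    and M1: "(\<integral>\<^sup>+ x \<in> ball xB r. ennreal (norm (M x) powr s) \<partial>lborel)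
        \<le> ennreal ((C * r powr (real CARD('n) * (1/s - 1/p))) powr s)"
    and M2: "(\<integral>\<^sup>+ x \<in> - ball xB r. ennreal (norm (M x) powr s * norm (x - xB) powr lam) \<partial>lborel)
        \<le> ennreal ((C * r powr (lam / s + real CARD('n) * (1/s - 1/p))) powr s)"
  shows "norm (fourier_transform M \<xi>) \<le> (\<Sum>k\<le>N. (2*pi*CARD('n))^k / fact k)
      * (\<Sum>\<alpha>\<in>{\<alpha>. mi_order \<alpha> \<le> N}.
           norm \<xi> ^ mi_order \<alpha> * norm (\<integral>x. M x * of_real (mi_pow (x - xB) \<alpha>) \<partial>lborel))
    + (2 * (2*pi) powr \<gamma> * weighted_moment_const CARD('n) s lam \<gamma> C)
      * (norm \<xi> powr \<gamma> * r powr (\<gamma> - gamma_p CARD('n) p))"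
proof -
  define J where "J = weighted_moment_const CARD('n) s lam \<gamma> C"
  define R where "R = r powr (\<gamma> - gamma_p CARD('n) p)"
  have \<gamma>0: "\<gamma> \<ge> 0" using \<gamma>(1) by linarith
  have weighted_nn: "(\<integral>\<^sup>+x. ennreal (norm (M x) * norm (x - xB) powr \<gamma>) \<partial>lborel) \<le> ennreal (J * R)"
    using weighted_moment_bound[of "\<lambda>x. norm (M x)"] M r p s C \<gamma> \<gamma>0 M1 M2
    unfolding J_def R_def by simp
  have weighted_meas: "(\<lambda>x. norm (M x) * norm (x - xB) powr \<gamma>) \<in> borel_measurable lborel"
    using M by measurable
  have "J * R \<ge> 0" unfolding J_def R_def using C by (simp add: weighted_moment_const_nonneg)
  note weighted = integrable_integral_le_of_nn_integral_le[OF weighted_meas _ weighted_nn this, simplified]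
  have on_ball: "integrable lborel (\<lambda>x. norm (M x) * indicator (ball xB r) x)"
    using M r s by (intro integrable_indicator_of_nn_integral_powr)
      (auto simp: emeasure_ball intro: order.strict_trans1[OF M1])
  have moments: "integrable lborel (\<lambda>x. norm (M x) * norm (x - xB) ^ m)" if "m \<le> N" for m
    using weighted(1) M r on_ball that \<gamma>(1)
    by (intro integrable_mult_norm_power[of _ r _ \<gamma>]) auto
  note moment_bound = norm_fourier_transform_le_moments[OF M moments weighted(1) \<gamma>(1,2), of \<xi>]
  have "2 * (2*pi) powr \<gamma> * norm \<xi> powr \<gamma> * (\<integral>x. norm (M x) * norm (x - xB) powr \<gamma> \<partial>lborel)
      \<le> (2 * (2*pi) powr \<gamma> * J) * (norm \<xi> powr \<gamma> * R)"
    using mult_left_mono[OF weighted(2), of "2 * (2*pi) powr \<gamma> * norm \<xi> powr \<gamma>"] by (simp add: mult_ac)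
  from order_trans[OF moment_bound add_left_mono[OF this]]
  show ?thesis unfolding J_def R_def .
qed

theorem lemma4p2:
  fixes p s lam \<gamma> C :: real and N :: nat
  assumes "0 < p" "p \<le> 1" "1 \<le> s" "p < s"
    and "lam > real CARD('n) * (s / p - 1)"
    and "C > 0"
    and "gamma_p CARD('n) p < \<gamma>" "\<gamma> < lam / s - real CARD('n) * (s - 1) / s"
    and "real N < \<gamma>" "\<gamma> \<le> real N + 1"
  shows "\<exists>K>0. \<forall>(M :: real^'n \<Rightarrow> complex) xB r.
     M \<in> borel_measurable lborel \<longrightarrow> r > 0 \<longrightarrow>
     (\<integral>\<^sup>+ x \<in> ball xB r. ennreal (norm (M x) powr s) \<partial>lborel)
        \<le> ennreal ((C * r powr (real CARD('n) * (1/s - 1/p))) powr s) \<longrightarrow>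
     (\<integral>\<^sup>+ x \<in> - ball xB r. ennreal (norm (M x) powr s * norm (x - xB) powr lam) \<partial>lborel)
        \<le> ennreal ((C * r powr (lam / s + real CARD('n) * (1/s - 1/p))) powr s) \<longrightarrow>
     (\<forall>\<xi>. norm (fourier_transform M \<xi>)
        \<le> K * (norm \<xi> powr \<gamma> * r powr (\<gamma> - gamma_p CARD('n) p)
           + (\<Sum>\<alpha> \<in> {\<alpha>. mi_order \<alpha> \<le> N}.
                norm \<xi> ^ mi_order \<alpha> * norm (\<integral>x. M x * of_real (mi_pow (x - xB) \<alpha>) \<partial>lborel))))"
proof -
  define J where "J = 2 * (2*pi) powr \<gamma> * weighted_moment_const CARD('n) s lam \<gamma> C"
  define A where "A = (\<Sum>k\<le>N. (2*pi*CARD('n))^k / fact k)"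
  have J: "J \<ge> 0" unfolding J_def using assms(6) by (simp add: weighted_moment_const_nonneg)
  have A: "A \<ge> 0" unfolding A_def by (intro sum_nonneg) auto
  show ?thesis
  proof (intro exI[of _ "A + J + 1"] conjI allI impI)
    show "A + J + 1 > 0" using A J by simp
    fix M :: "real^'n \<Rightarrow> complex" and xB \<xi> :: "real^'n" and r :: real
    assume "M \<in> borel_measurable lborel" "r > 0"
      "(\<integral>\<^sup>+ x \<in> ball xB r. ennreal (norm (M x) powr s) \<partial>lborel)
        \<le> ennreal ((C * r powr (real CARD('n) * (1/s - 1/p))) powr s)"
      "(\<integral>\<^sup>+ x \<in> - ball xB r. ennreal (norm (M x) powr s * norm (x - xB) powr lam) \<partial>lborel)
        \<le> ennreal ((C * r powr (lam / s + real CARD('n) * (1/s - 1/p))) powr s)"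
    note bound = norm_fourier_transform_bound[OF this(1,2) assms(1,3,6,9,10,8) this(3,4), of \<xi>]
    define T where "T = (\<Sum>\<alpha> \<in> {\<alpha>. mi_order \<alpha> \<le> N}.
        norm \<xi> ^ mi_order \<alpha> * norm (\<integral>x. M x * of_real (mi_pow (x - xB) \<alpha>) \<partial>lborel))"
    define P where "P = norm \<xi> powr \<gamma> * r powr (\<gamma> - gamma_p CARD('n) p)"
    have "T \<ge> 0" "P \<ge> 0" unfolding T_def P_def by (auto intro: sum_nonneg)
    have "norm (fourier_transform M \<xi>) \<le> A * T + J * P"
      using bound unfolding A_def J_def T_def P_def .
    also have "\<dots> \<le> (A + J + 1) * (P + T)"
      using \<open>T \<ge> 0\<close> \<open>P \<ge> 0\<close> A J by (simp add: algebra_simps add_increasing)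
    finally show "norm (fourier_transform M \<xi>) \<le> (A + J + 1) * (P + T)" .
  qed
qed

end
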